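(* Let $L,n$ be positive integers. As maps on $\mathcal M(L,n)$, the operators $e_i^\star$ ($1\le i\le L-1$) satisfy: (i) $(e_i^\star)^2=e_i^\star$; (ii) $e_i^\star e_j^\star=e_j^\star e_i^\star$ whenever $|i-j|\ge2$; (iii) $e_i^\star e_{i+1}^\star e_i^\star=e_{i+1}^\star e_i^\star e_{i+1}^\star$ for $1\le i\le L-2$.
   Context: $\mathcal M(L,n)$ is the set of tuples $B=(B_1,\dots,B_L)$ of subsets of $[n]$, drawn as an $L\times n$ grid with rows $1..L$ bottom to top, columns $1..n$ left to right, a ball in cell $(r,j)$ iff $j\in B_r$. The column word $\mathrm{cw}(B)$ scans columns left to right, each column top to bottom, recording row numbers of balls. For a word $w$ and $i\ge1$, $\mathrm{Par}_i(w)$ is obtained by reading $w$ left to right, writing "(" for each letter $i+1$ and ")" for each letter $i$, and iteratively matching a "(" with a ")" to its right whenever they are adjacent or only matched parentheses lie between them; letters whose parentheses remain unmatched are unmatched. The operator $e_i^\star$ moves every ball of row $i+1$ whose letter $i+1$ in $\mathrm{cw}(B)$ is unmatched in $\mathrm{Par}_i(\mathrm{cw}(B))$ down to the (necessarily empty) cell of row $i$ in the same column. Products of operators denote composition acting right to left. *)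

theory Defs
  imports Main
begin

text \<open>A ball configuration B = (B_1,...,B_L) is represented as a function
  B :: nat => nat set, where B r is the set of columns of row r.
  Rows outside 1..L are required to be empty.\<close>

definition Mset :: "nat \<Rightarrow> nat \<Rightarrow> (nat \<Rightarrow> nat set) set" where
  "Mset L n = {B. (\<forall>r. B r \<subseteq> {1..n}) \<and> (\<forall>r. r \<notin> {1..L} \<longrightarrow> B r = {})}"

text \<open>Column word, each letter tagged with its column (position data):
  columns left to right, each column top to bottom (rows decreasing).\<close>

definition cw :: "nat \<Rightarrow> nat \<Rightarrow> (nat \<Rightarrow> nat set) \<Rightarrow> (nat \<times> nat) list" where
  "cw L n B = concat (map (\<lambda>j. map (\<lambda>r. (r, j)) (filter (\<lambda>r. j \<in> B r) (rev [1..<L+1]))) [1..<n+1])"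

text \<open>Bracket matching Par_i: letter i+1 is "(", letter i is ")".\<close>

fun par_step :: "nat \<Rightarrow> nat list \<Rightarrow> nat \<times> nat \<Rightarrow> nat list" where
  "par_step i st (a, j) =
     (if a = i + 1 then j # st
      else if a = i then (case st of [] \<Rightarrow> [] | _ # st' \<Rightarrow> st')
      else st)"

definition unmatched_open :: "nat \<Rightarrow> (nat \<times> nat) list \<Rightarrow> nat set" where
  "unmatched_open i w = set (foldl (par_step i) [] w)"

definition estar :: "nat \<Rightarrow> nat \<Rightarrow> nat \<Rightarrow> (nat \<Rightarrow> nat set) \<Rightarrow> (nat \<Rightarrow> nat set)" where
  "estar L n i B =
     (let U = unmatched_open i (cw L n B)
      in B(i := B i \<union> U, i + 1 := B (i + 1) - U))"

end

theory Submission
  imports Defs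
begin

text \<open>The column word determines the configuration, and \<open>e\<^sub>i\<^sup>\<star>\<close> acts on it
  letter by letter: read from the right, a letter \<open>i+1\<close> is lowered to \<open>i\<close> exactly when
  no unmatched letter \<open>i\<close> follows it. So the three relations are identities between operators
  on words, which follow by induction on the word once one tracks how many letters \<open>i\<close>
  (and \<open>i+1\<close>) of each suffix remain unmatched.\<close>

fun unmatched_close_count :: "nat \<Rightarrow> (nat \<times> nat) list \<Rightarrow> nat" where
  "unmatched_close_count i [] = 0"
| "unmatched_close_count i ((a, j) # w) =
     (if a = i then Suc (unmatched_close_count i w)
      else if a = Suc i then unmatched_close_count i w - 1
      else unmatched_close_count i w)"

fun estar_word :: "nat \<Rightarrow> (nat \<times> nat) list \<Rightarrow> (nat \<times> nat) list" where
  "estar_word i [] = []"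
| "estar_word i ((a, j) # w) =
     (if a = Suc i \<and> unmatched_close_count i w = 0 then (i, j) else (a, j)) # estar_word i w"

lemma set_foldl_par_step:
  "set (foldl (par_step i) st w) = unmatched_open i w \<union> set (drop (unmatched_close_count i w) st)"
proof (induction w arbitrary: st)
  case Nil
  show ?case by (simp add: unmatched_open_def)
next
  case (Cons x w)
  obtain a j where x: "x = (a, j)" by force
  have "unmatched_open i (x # w)
      = unmatched_open i w \<union> set (drop (unmatched_close_count i w) (par_step i [] x))"
    using Cons.IH[of "par_step i [] x"] by (simp add: unmatched_open_def)
  then show ?case
    using Cons.IH[of "par_step i st x"] unfolding x
    by (cases "a = i"; cases "a = Suc i"; cases st; cases "unmatched_close_count i w") (auto simp: drop_Suc)
qed

lemma unmatched_open_Nil [simp]: "unmatched_open i [] = {}"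
  by (simp add: unmatched_open_def)

lemma unmatched_open_Cons [simp]:
  "unmatched_open i ((a, j) # w) =
     (if a = Suc i \<and> unmatched_close_count i w = 0 then insert j (unmatched_open i w)
      else unmatched_open i w)"
  using set_foldl_par_step[of i "par_step i [] (a, j)" w]
  by (cases "a = i"; cases "a = Suc i"; cases "unmatched_close_count i w") (auto simp: unmatched_open_def)

lemma unmatched_open_subset: "unmatched_open i w \<subseteq> {j. (Suc i, j) \<in> set w}"
proof (induction w)
  case (Cons x w)
  then show ?case by (cases x) auto
qed simp

lemma unmatched_open_split:
  assumes "j \<in> unmatched_open i w"
  obtains p s where "w = p @ (Suc i, j) # s" and "unmatched_close_count i s = 0"
  using assms
proof (induction w arbitrary: thesis rule: estar_word.induct)
  case (2 i a k w)
  show ?case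
  proof (cases "a = Suc i \<and> unmatched_close_count i w = 0 \<and> k = j")
    case True
    then show ?thesis using "2.prems"(1)[of "[]" w] by simp
  next
    case False
    then have "j \<in> unmatched_open i w" using "2.prems"(2) by (auto split: if_splits)
    then show ?thesis using "2.IH" "2.prems"(1) by (metis append_Cons)
  qed
qed simp

lemma estar_word_eq_map:
  assumes "distinct w"
  shows "estar_word i w = map (\<lambda>(a, j). if a = Suc i \<and> j \<in> unmatched_open i w then (i, j) else (a, j)) w"
  using assms
proof (induction w rule: estar_word.induct)
  case (2 i a j w)
  then have "(a, j) \<notin> set w" by simp
  then have "j \<notin> unmatched_open i w" if "a = Suc i"
    using unmatched_open_subset that by blast
  moreover have "k \<in> unmatched_open i ((a, j) # w) \<longleftrightarrow> k \<in> unmatched_open i w"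
    if "(Suc i, k) \<in> set w" for k
    using that \<open>(a, j) \<notin> set w\<close> by auto
  ultimately show ?case using 2 by (auto intro!: map_cong)
qed simp

lemma estar_word_idem: "estar_word i (estar_word i w) = estar_word i w"
proof -
  have "estar_word i (estar_word i w) = estar_word i w
    \<and> unmatched_close_count i w \<le> unmatched_close_count i (estar_word i w)"
  proof (induction w)
    case (Cons x w)
    then show ?case by (cases x) auto
  qed simp
  then show ?thesis ..
qed

lemma estar_word_commute:
  assumes "i + 2 \<le> k \<or> k + 2 \<le> i"
  shows "estar_word i (estar_word k w) = estar_word k (estar_word i w)"
proof -
  have "estar_word i (estar_word k w) = estar_word k (estar_word i w)
    \<and> unmatched_close_count i (estar_word k w) = unmatched_close_count i w
    \<and> unmatched_close_count k (estar_word i w) = unmatched_close_count k w"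
  proof (induction w)
    case (Cons x w)
    then show ?case using assms by (cases x) auto
  qed simp
  then show ?thesis ..
qed

lemma estar_word_braid:
  "estar_word i (estar_word (Suc i) (estar_word i w))
 = estar_word (Suc i) (estar_word i (estar_word (Suc i) w))"
proof -
  let ?c = "unmatched_close_count i" and ?d = "unmatched_close_count (Suc i)"
  let ?E = "estar_word i" and ?F = "estar_word (Suc i)"
  \<comment> \<open>Each side acts on a letter according to the unmatched counts of the suffix behind it;
    the last three conjuncts express the counts seen by the right-hand side through those seen
    by the left-hand side, so both sides act alike on every letter.\<close>
  have "?E (?F (?E w)) = ?F (?E (?F w))
    \<and> ?d w = ?d (?E w) + ?c (?F (?E w)) - min (?c w) (?c (?F (?E w)))
    \<and> ?c (?F w) = min (?c w) (?c (?F (?E w)))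
    \<and> ?d (?E (?F w)) = ?c w + ?d (?E w) - min (?c w) (?c (?F (?E w)))"
  proof (induction w)
    case (Cons x w)
    obtain a j where x: "x = (a, j)" by force
    show ?case using Cons.IH unfolding x
      by (cases "a = i"; cases "a = Suc i"; cases "a = Suc (Suc i)";
          simp add: min_def split: if_splits; arith)
  qed simp
  then show ?thesis ..
qed

lemma distinct_cw: "distinct (cw L n B)"
proof -
  have columns: "distinct (concat (map (\<lambda>j. map (\<lambda>r. (r, j)) (filter (P j) rs)) js))"
    if "distinct js" "distinct rs" for P js and rs :: "nat list"
    using that by (induction js) (auto simp: distinct_map inj_on_def)
  show ?thesis unfolding cw_def by (rule columns) simp_all
qed

lemma set_cw: "(r, j) \<in> set (cw L n B) \<longleftrightarrow> r \<in> {1..L} \<and> j \<in> {1..n} \<and> j \<in> B r"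
  unfolding cw_def by (fastforce simp del: upt_Suc)

lemma inj_on_cw: "inj_on (cw L n) (Mset L n)"
proof (rule inj_onI, rule ext)
  fix B B' r
  assume B: "B \<in> Mset L n" and B': "B' \<in> Mset L n" and eq: "cw L n B = cw L n B'"
  show "B r = B' r"
  proof (cases "r \<in> {1..L}")
    case True
    then have "B r = {j. (r, j) \<in> set (cw L n B)}" "B' r = {j. (r, j) \<in> set (cw L n B')}"
      using B B' unfolding set_cw Mset_def by blast+
    then show ?thesis using eq by simp
  next
    case False
    then show ?thesis using B B' unfolding Mset_def by blast
  qed
qed

lemma rows_split:
  assumes "1 \<le> i" "i < L"
  shows "rev [1..<L+1] = rev [i+2..<L+1] @ [Suc i, i] @ rev [1..<i]"
proof -
  have "[1..<L+1] = [1..<i] @ i # Suc i # [i+2..<L+1]"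
    using assms upt_add_eq_append[of 1 i "L+1-i"] by (simp add: upt_conv_Cons)
  then show ?thesis by simp
qed

lemma cw_adjacent_rows:
  assumes "1 \<le> i" "i < L" "j \<in> {1..n}" "j \<in> B i" "j \<in> B (Suc i)"
  obtains p s where "cw L n B = p @ (Suc i, j) # (i, j) # s"
proof -
  let ?col = "\<lambda>rs j. map (\<lambda>r. (r, j)) (filter (\<lambda>r. j \<in> B r) rs)"
  have "j \<in> set [1..<n+1]" using assms(3) by (simp del: upt_Suc)
  then obtain js1 js2 where js: "[1..<n+1] = js1 @ j # js2"
    by (meson split_list)
  have "cw L n B = (concat (map (?col (rev [1..<L+1])) js1) @ ?col (rev [i+2..<L+1]) j)
      @ (Suc i, j) # (i, j) # (?col (rev [1..<i]) j @ concat (map (?col (rev [1..<L+1])) js2))"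
    unfolding cw_def js rows_split[OF assms(1,2)] using assms(4,5) by simp
  then show ?thesis using that by blast
qed

lemma cw_move_down:
  assumes "1 \<le> i" "i < L" and U: "\<forall>j\<in>U. j \<notin> B i \<and> j \<in> B (Suc i)"
  shows "cw L n (B(i := B i \<union> U, Suc i := B (Suc i) - U))
       = map (\<lambda>(a, j). if a = Suc i \<and> j \<in> U then (i, j) else (a, j)) (cw L n B)"
    (is "cw L n ?B' = map ?g _")
proof -
  let ?col = "\<lambda>B j rs. map (\<lambda>r. (r, j)) (filter (\<lambda>r. j \<in> B r) rs)"
  have outer: "?col ?B' j rs = map ?g (?col B j rs)"
    if "i \<notin> set rs" "Suc i \<notin> set rs" for rs j
    using that by (induction rs) auto
  have middle: "?col ?B' j [Suc i, i] = map ?g (?col B j [Suc i, i])" for j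
    using U by (cases "j \<in> U") auto
  have column: "?col ?B' j (rev [1..<L+1]) = map ?g (?col B j (rev [1..<L+1]))" for j
  proof -
    have "?col ?B' j (rev [i+2..<L+1]) = map ?g (?col B j (rev [i+2..<L+1]))"
      and "?col ?B' j (rev [1..<i]) = map ?g (?col B j (rev [1..<i]))"
      by (rule outer; simp)+
    then show ?thesis
      unfolding rows_split[OF assms(1,2)] filter_append map_append middle by (rule arg_cong2)
  qed
  show ?thesis
    unfolding cw_def map_concat by (simp only: column map_map comp_def)
qed

lemma unmatched_open_cw:
  assumes "1 \<le> i" "i < L" "j \<in> unmatched_open i (cw L n B)"
  shows "j \<notin> B i" and "j \<in> B (Suc i)" and "j \<in> {1..n}"
proof -
  have "(Suc i, j) \<in> set (cw L n B)" using assms(3) unmatched_open_subset by fast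
  then show "j \<in> B (Suc i)" and "j \<in> {1..n}" by (simp_all add: set_cw)
  obtain p s where decomp: "cw L n B = p @ (Suc i, j) # s" and "unmatched_close_count i s = 0"
    using unmatched_open_split[OF assms(3)] by blast
  show "j \<notin> B i"
  proof
    assume "j \<in> B i"
    then obtain p' s' where decomp': "cw L n B = p' @ (Suc i, j) # (i, j) # s'"
      using cw_adjacent_rows[OF assms(1,2) \<open>j \<in> {1..n}\<close> \<open>j \<in> B i\<close> \<open>j \<in> B (Suc i)\<close>] by blast
    have "distinct (p @ (Suc i, j) # s)" using distinct_cw[of L n B] unfolding decomp .
    then have "(Suc i, j) \<notin> set p" "(Suc i, j) \<notin> set s" by simp_all
    moreover have "p @ (Suc i, j) # s = p' @ (Suc i, j) # (i, j) # s'" using decomp decomp' by simp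
    ultimately have "s = (i, j) # s'" by (simp add: append_Cons_eq_iff)
    then show False using \<open>unmatched_close_count i s = 0\<close> by simp
  qed
qed

lemma cw_estar:
  assumes "1 \<le> i" "i < L"
  shows "cw L n (estar L n i B) = estar_word i (cw L n B)"
proof -
  have "\<forall>j\<in>unmatched_open i (cw L n B). j \<notin> B i \<and> j \<in> B (Suc i)"
    using unmatched_open_cw[OF assms] by blast
  then have "cw L n (B(i := B i \<union> unmatched_open i (cw L n B),
      Suc i := B (Suc i) - unmatched_open i (cw L n B))) = estar_word i (cw L n B)"
    unfolding estar_word_eq_map[OF distinct_cw] by (rule cw_move_down[OF assms])
  then show ?thesis unfolding estar_def Let_def by simp
qed

lemma estar_in_Mset:
  assumes "B \<in> Mset L n" "1 \<le> i" "i < L"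
  shows "estar L n i B \<in> Mset L n"
proof -
  let ?U = "unmatched_open i (cw L n B)"
  have "?U \<subseteq> {1..n}"
    using unmatched_open_cw(3)[OF assms(2,3)] by blast
  moreover have "\<forall>r. B r \<subseteq> {1..n}" and "\<forall>r. r \<notin> {1..L} \<longrightarrow> B r = {}"
    using assms(1) unfolding Mset_def by blast+
  ultimately have "\<forall>r. (B(i := B i \<union> ?U, i + 1 := B (i + 1) - ?U)) r \<subseteq> {1..n}"
    and "\<forall>r. r \<notin> {1..L} \<longrightarrow> (B(i := B i \<union> ?U, i + 1 := B (i + 1) - ?U)) r = {}"
    using assms(2,3) by auto
  then show ?thesis unfolding estar_def Mset_def Let_def by blast
qed

lemma foldr_estar_in_Mset:
  "B \<in> Mset L n \<Longrightarrow> set ks \<subseteq> {1..<L} \<Longrightarrow> foldr (estar L n) ks B \<in> Mset L n"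
proof (induction ks)
  case (Cons k ks)
  then show ?case using estar_in_Mset by simp
qed simp

lemma cw_foldr_estar:
  "set ks \<subseteq> {1..<L} \<Longrightarrow> cw L n (foldr (estar L n) ks B) = foldr estar_word ks (cw L n B)"
proof (induction ks)
  case (Cons k ks)
  then show ?case using cw_estar by simp
qed simp

lemma foldr_estar_eqI:
  assumes "B \<in> Mset L n" "set ks \<subseteq> {1..<L}" "set ls \<subseteq> {1..<L}"
    and "\<And>w. foldr estar_word ks w = foldr estar_word ls w"
  shows "foldr (estar L n) ks B = foldr (estar L n) ls B"
proof (rule inj_onD[OF inj_on_cw])
  show "cw L n (foldr (estar L n) ks B) = cw L n (foldr (estar L n) ls B)"
    unfolding cw_foldr_estar[OF assms(2)] cw_foldr_estar[OF assms(3)] assms(4) ..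
  show "foldr (estar L n) ks B \<in> Mset L n" "foldr (estar L n) ls B \<in> Mset L n"
    by (rule foldr_estar_in_Mset[OF assms(1)], fact)+
qed

theorem theorem4p6:
  fixes L n :: nat
  assumes "1 \<le> L" and "1 \<le> n"
  shows "(\<forall>i\<in>{1..L-1}. \<forall>B\<in>Mset L n.
            estar L n i (estar L n i B) = estar L n i B)
       \<and> (\<forall>i\<in>{1..L-1}. \<forall>j\<in>{1..L-1}. (i + 2 \<le> j \<or> j + 2 \<le> i) \<longrightarrow>
            (\<forall>B\<in>Mset L n. estar L n i (estar L n j B) = estar L n j (estar L n i B)))
       \<and> (\<forall>i\<in>{1..L-2}. \<forall>B\<in>Mset L n.
            estar L n i (estar L n (i+1) (estar L n i B))
          = estar L n (i+1) (estar L n i (estar L n (i+1) B)))"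
proof (intro conjI ballI impI)
  fix i B assume "i \<in> {1..L-1}" and B: "B \<in> Mset L n"
  then have "set [i] \<subseteq> {1..<L}" by auto
  then show "estar L n i (estar L n i B) = estar L n i B"
    using foldr_estar_eqI[OF B, of "[i, i]" "[i]"] estar_word_idem by simp
next
  fix i j B assume "i \<in> {1..L-1}" "j \<in> {1..L-1}" and far: "i + 2 \<le> j \<or> j + 2 \<le> i"
    and B: "B \<in> Mset L n"
  then have "set [i, j] \<subseteq> {1..<L}" by auto
  then show "estar L n i (estar L n j B) = estar L n j (estar L n i B)"
    using foldr_estar_eqI[OF B, of "[i, j]" "[j, i]"] estar_word_commute[OF far] by simp
next
  fix i B assume "i \<in> {1..L-2}" and B: "B \<in> Mset L n"
  then have "set [i, i + 1] \<subseteq> {1..<L}" by auto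
  then show "estar L n i (estar L n (i+1) (estar L n i B))
           = estar L n (i+1) (estar L n i (estar L n (i+1) B))"
    using foldr_estar_eqI[OF B, of "[i, i+1, i]" "[i+1, i, i+1]"] estar_word_braid by simp
qed

end
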